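(* Consider the Rayleigh fading channel $y=hx+v$, $v\sim\mathcal{CN}(0,1)$, perfect CSI at transmitter and receiver, $|h|^2$ exponential with unit mean. Let $\mathcal{A}(\mathrm{SNR})$ be a variable PAPR with $\mathcal{A}(\mathrm{SNR})\to\infty$ and $\mathcal{A}(\mathrm{SNR})\,\mathrm{SNR}\to0$ as $\mathrm{SNR}\to0$, and such that the peak constraint is effective ($\mathcal{A}(\mathrm{SNR})\,\mathrm{SNR}<1/\lambda_0$, where $\mathrm{SNR}=\mathbf{E}[[1/\lambda_0-1/|h|^2]^+]$). Let $\lambda$ be determined by $\mathrm{SNR}=\mathbf{E}[\min\{[1/\lambda-1/|h|^2]^+,\mathcal{A}(\mathrm{SNR})\,\mathrm{SNR}\}]$ with $\lambda\mathcal{A}(\mathrm{SNR})\mathrm{SNR}<1$, define $$l(\mathrm{SNR})=\frac{1}{\frac1\lambda-\mathcal{A}(\mathrm{SNR})\,\mathrm{SNR}}-\lambda,$$ and suppose $l_0=\lim_{\mathrm{SNR}\to0}l(\mathrm{SNR})$ exists in $[0,\infty]$. Let $C(\mathrm{SNR})$ be the capacity under average power constraint $\mathrm{SNR}$ and peak power constraint $\mathcal{A}(\mathrm{SNR})\,\mathrm{SNR}$. Then, as $\mathrm{SNR}\to0$, $$C(\mathrm{SNR})\approx\begin{cases}\mathrm{SNR}\log\frac{1}{\mathrm{SNR}}, & l_0>0,\\ \mathrm{SNR}\log\mathcal{A}(\mathrm{SNR}), & l_0=0,\end{cases}$$ where $f\approx g$ means $\lim_{\mathrm{SNR}\to0}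f(\mathrm{SNR})/g(\mathrm{SNR})=1$.
   Context: $[u]^+=\max\{0,u\}$; logarithms are natural. $C(\mathrm{SNR})=\sup\mathbf{E}[\log(1+P(h)|h|^2)]$ over measurable $P(h)\ge0$ with $\mathbf{E}[P(h)]\le\mathrm{SNR}$ and $\max_hP(h)\le\mathcal{A}(\mathrm{SNR})\,\mathrm{SNR}$; it equals $\int_\lambda^\infty\min\{\log(t/\lambda),\log(1+\mathcal{A}(\mathrm{SNR})\mathrm{SNR}\,t)\}e^{-t}dt$. *)

theory Defs
  imports "HOL-Probability.Probability"
begin

text \<open>Distribution of the channel power gain t = |h|^2: exponential with unit mean.\<close>
definition gainM :: "real measure" where
  "gainM = density lborel (exponential_density 1)"

definition Eg :: "(real \<Rightarrow> real) \<Rightarrow> real" where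
  "Eg f = integral\<^sup>L gainM f"

text \<open>Capacity with average power constraint snr and peak power constraint peak:
  sup of E[log(1 + P |h|^2)] over measurable power allocations P \<ge> 0 (as a function of |h|^2)
  with E[P] \<le> snr and P \<le> peak.\<close>
definition capacity :: "real \<Rightarrow> real \<Rightarrow> real" where
  "capacity snr peak = Sup {Eg (\<lambda>t. ln (1 + P t * t)) | P.
      P \<in> borel_measurable borel \<and> (\<forall>t. 0 \<le> P t \<and> P t \<le> peak) \<and>
      integrable gainM P \<and> Eg P \<le> snr}"

end

theory Submission
  imports Defs "HOL-Real_Asymp.Real_Asymp"
begin

text \<open>Since \<open>ln (1 + P t) \<le> P t \<le> \<tau> P + a [t - \<tau>]\<^sup>+\<close> for \<open>0 \<le> P \<le> a\<close>, every admissible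
  allocation has rate at most \<open>\<tau> SNR + a e\<^sup>-\<^sup>\<tau>\<close>; with \<open>a = \<A> SNR\<close> and \<open>\<tau> = ln \<A>\<close> this is
  \<open>SNR (ln \<A> + 1)\<close>. Conversely, the on-off allocation spending power \<open>b\<close> exactly when
  \<open>|h|\<^sup>2 \<ge> \<tau>\<close>, with \<open>b e\<^sup>-\<^sup>\<tau> = SNR\<close>, has rate \<open>ln (1 + b \<tau>) e\<^sup>-\<^sup>\<tau> \<approx> SNR \<tau>\<close> as long as
  \<open>b \<tau>\<close> is small; taking \<open>\<tau> = min (ln \<A>) (L - 2 ln L)\<close> with \<open>L = ln (1/SNR)\<close> keeps
  \<open>b \<tau> \<le> 1/L\<close>. Hence \<open>C \<approx> SNR ln \<A>\<close> in both cases. If moreover \<open>l\<^sub>0 > 0\<close>, the water level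
  equation forces \<open>\<lambda> \<le> L\<close> and then \<open>\<A> SNR \<ge> c/(2L\<^sup>2)\<close>, so that \<open>ln \<A> \<approx> L\<close>.\<close>

lemma prob_space_gainM: "prob_space gainM"
  unfolding gainM_def by (rule prob_space_exponential_density) simp

lemma sets_gainM [measurable_cong, simp]: "sets gainM = sets borel"
  unfolding gainM_def by simp

lemma space_gainM [simp]: "space gainM = UNIV"
  unfolding gainM_def by simp

lemma AE_gainM_pos: "AE t in gainM. 0 < t"
proof -
  have "AE t in lborel. t \<noteq> (0::real)" by (rule AE_lborel_singleton)
  then have "AE t in lborel. ennreal (exponential_density 1 t) \<noteq> 0 \<longrightarrow> 0 < t"
    by eventually_elim (auto simp: exponential_density_def)
  then show ?thesis
    unfolding gainM_def by (subst AE_density) auto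
qed

lemma has_bochner_integral_gainM_nonneg:
  assumes [measurable]: "f \<in> borel_measurable borel" and "\<And>x. 0 \<le> f x" and "0 \<le> c"
    and "(\<integral>\<^sup>+x. ennreal (exponential_density 1 x * f x) \<partial>lborel) = ennreal c"
  shows "has_bochner_integral gainM f c"
proof (rule has_bochner_integral_nn_integral)
  have "(\<integral>\<^sup>+x. ennreal (f x) \<partial>gainM)
      = (\<integral>\<^sup>+x. ennreal (exponential_density 1 x) * ennreal (f x) \<partial>lborel)"
    unfolding gainM_def by (subst nn_integral_density) auto
  also have "\<dots> = (\<integral>\<^sup>+x. ennreal (exponential_density 1 x * f x) \<partial>lborel)"
    by (intro nn_integral_cong) (simp add: ennreal_mult' exponential_density_def)
  finally show "(\<integral>\<^sup>+x. ennreal (f x) \<partial>gainM) = ennreal c"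
    using assms(4) by simp
qed (use assms in auto)

lemma has_bochner_integral_gainM_excess:
  assumes "0 \<le> \<tau>"
  shows "has_bochner_integral gainM (\<lambda>t. max 0 (t - \<tau>)) (exp (- \<tau>))"
proof (rule has_bochner_integral_gainM_nonneg)
  have "(\<integral>\<^sup>+x. ennreal (exponential_density 1 x * max 0 (x - \<tau>)) \<partial>lborel)
      = (\<integral>\<^sup>+x. ennreal ((x - \<tau>) * exp (- x)) * indicator {\<tau>..} x \<partial>lborel)"
    using assms
    by (intro nn_integral_cong) (auto simp: exponential_density_def indicator_def mult.commute)
  also have "\<dots> = ennreal (0 - (- ((\<tau> - \<tau> + 1) * exp (- \<tau>))))"
  proof (rule nn_integral_FTC_atLeast[where F = "\<lambda>x. - ((x - \<tau> + 1) * exp (- x))"])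
    show "(\<lambda>x. (x - \<tau>) * exp (- x)) \<in> borel_measurable borel"
      by (intro borel_measurable_continuous_onI continuous_intros)
    show "DERIV (\<lambda>x. - ((x - \<tau> + 1) * exp (- x))) x :> (x - \<tau>) * exp (- x)" for x
      by (auto intro!: derivative_eq_intros simp: algebra_simps)
    show "((\<lambda>x. - ((x - \<tau> + 1) * exp (- x))) \<longlongrightarrow> 0) at_top"
      by real_asymp
  qed simp
  finally show "(\<integral>\<^sup>+x. ennreal (exponential_density 1 x * max 0 (x - \<tau>)) \<partial>lborel)
      = ennreal (exp (- \<tau>))"
    by simp
qed auto

lemma has_bochner_integral_gainM_indicator:
  assumes "0 \<le> \<tau>"
  shows "has_bochner_integral gainM (indicator {\<tau>..}) (exp (- \<tau>))"
proof (rule has_bochner_integral_gainM_nonneg)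
  have "(\<integral>\<^sup>+x. ennreal (exponential_density 1 x * indicator {\<tau>..} x) \<partial>lborel)
      = (\<integral>\<^sup>+x. ennreal (exp (- x)) * indicator {\<tau>..} x \<partial>lborel)"
    using assms by (intro nn_integral_cong) (auto simp: exponential_density_def indicator_def)
  also have "\<dots> = ennreal (0 - (- exp (- \<tau>)))"
  proof (rule nn_integral_FTC_atLeast[where F = "\<lambda>x. - exp (- x)"])
    show "(\<lambda>x::real. exp (- x)) \<in> borel_measurable borel"
      by (intro borel_measurable_continuous_onI continuous_intros)
    show "DERIV (\<lambda>x. - exp (- x)) x :> exp (- x)" for x
      by (auto intro!: derivative_eq_intros)
    show "((\<lambda>x::real. - exp (- x)) \<longlongrightarrow> 0) at_top"
      by real_asymp
  qed simp
  finally show "(\<integral>\<^sup>+x. ennreal (exponential_density 1 x * indicator {\<tau>..} x) \<partial>lborel)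
      = ennreal (exp (- \<tau>))"
    by simp
qed auto

lemma
  assumes "0 \<le> \<tau>"
  shows integrable_gainM_excess: "integrable gainM (\<lambda>t. max 0 (t - \<tau>))"
    and Eg_excess: "Eg (\<lambda>t. max 0 (t - \<tau>)) = exp (- \<tau>)"
    and integrable_gainM_indicator: "integrable gainM (indicator {\<tau>..} :: real \<Rightarrow> real)"
    and Eg_indicator: "Eg (indicator {\<tau>..}) = exp (- \<tau>)"
  using has_bochner_integral_gainM_excess[OF assms] has_bochner_integral_gainM_indicator[OF assms]
  by (auto simp: Eg_def has_bochner_integral_iff)

lemma integrable_gainM_rate:
  assumes [measurable]: "P \<in> borel_measurable borel" and P: "\<And>t. 0 \<le> P t \<and> P t \<le> a"
  shows "integrable gainM (\<lambda>t. ln (1 + P t * t))"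
proof (rule Bochner_Integration.integrable_bound)
  show "integrable gainM (\<lambda>t. a * max 0 (t - 0))"
    using integrable_gainM_excess[of 0] by simp
  show "AE t in gainM. norm (ln (1 + P t * t)) \<le> norm (a * max 0 (t - 0))"
    using AE_gainM_pos
  proof eventually_elim
    case (elim t)
    have "0 \<le> P t * t" "P t * t \<le> a * t"
      using P[of t] elim by (simp_all add: mult_right_mono)
    moreover have "ln (1 + P t * t) \<le> P t * t" "0 \<le> ln (1 + P t * t)"
      using ln_add_one_self_le_self[of "P t * t"] \<open>0 \<le> P t * t\<close> by simp_all
    ultimately show ?case
      using elim by (smt (verit) real_norm_def)
  qed
qed simp

lemma Eg_rate_le:
  assumes [measurable]: "P \<in> borel_measurable borel" and P: "\<And>t. 0 \<le> P t \<and> P t \<le> a"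
    and "integrable gainM P" and "Eg P \<le> s" and "0 \<le> \<tau>"
  shows "Eg (\<lambda>t. ln (1 + P t * t)) \<le> \<tau> * s + a * exp (- \<tau>)"
proof -
  have "Eg (\<lambda>t. ln (1 + P t * t)) \<le> Eg (\<lambda>t. \<tau> * P t + a * max 0 (t - \<tau>))"
    unfolding Eg_def
  proof (rule integral_mono_AE)
    show "integrable gainM (\<lambda>t. ln (1 + P t * t))"
      by (rule integrable_gainM_rate[OF _ P]) simp
    show "integrable gainM (\<lambda>t. \<tau> * P t + a * max 0 (t - \<tau>))"
      using assms(3) integrable_gainM_excess[OF \<open>0 \<le> \<tau>\<close>] by auto
    show "AE t in gainM. ln (1 + P t * t) \<le> \<tau> * P t + a * max 0 (t - \<tau>)"
      using AE_gainM_pos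
    proof eventually_elim
      case (elim t)
      have "P t * t \<le> \<tau> * P t + a * max 0 (t - \<tau>)"
      proof (cases "t \<le> \<tau>")
        case True
        then show ?thesis
          using P[of t] P[of 0] mult_left_mono[OF True, of "P t"] by (simp add: mult.commute)
      next
        case False
        then have "P t * (t - \<tau>) \<le> a * (t - \<tau>)"
          using P[of t] by (simp add: mult_right_mono)
        then show ?thesis
          using False by (simp add: algebra_simps)
      qed
      then show ?case
        using ln_add_one_self_le_self[of "P t * t"] P[of t] elim by simp
    qed
  qed
  also have "\<dots> = \<tau> * Eg P + a * exp (- \<tau>)"
    using assms(3) integrable_gainM_excess[OF \<open>0 \<le> \<tau>\<close>] Eg_excess[OF \<open>0 \<le> \<tau>\<close>]
    by (simp add: Eg_def)
  also have "\<dots> \<le> \<tau> * s + a * exp (- \<tau>)"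
    using assms(4,5) by (simp add: mult_left_mono)
  finally show ?thesis .
qed

definition achievable_rates :: "real \<Rightarrow> real \<Rightarrow> real set" where
  "achievable_rates snr peak = {Eg (\<lambda>t. ln (1 + P t * t)) | P.
      P \<in> borel_measurable borel \<and> (\<forall>t. 0 \<le> P t \<and> P t \<le> peak) \<and>
      integrable gainM P \<and> Eg P \<le> snr}"

lemma capacity_eq_Sup_achievable_rates: "capacity s a = Sup (achievable_rates s a)"
  unfolding capacity_def achievable_rates_def ..

lemma achievable_rate_le: "x \<in> achievable_rates s a \<Longrightarrow> 0 \<le> \<tau> \<Longrightarrow> x \<le> \<tau> * s + a * exp (- \<tau>)"
  unfolding achievable_rates_def using Eg_rate_le by blast

lemma bdd_above_achievable_rates: "bdd_above (achievable_rates s a)"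
  using achievable_rate_le[of _ s a 0] by (intro bdd_aboveI[of _ a]) auto

lemma capacity_le:
  assumes "0 \<le> s" "0 \<le> a" "0 \<le> \<tau>"
  shows "capacity s a \<le> \<tau> * s + a * exp (- \<tau>)"
proof -
  have "0 \<in> achievable_rates s a"
    unfolding achievable_rates_def using assms
    by (intro CollectI exI[of _ "\<lambda>_. 0"]) (simp add: Eg_def)
  then show ?thesis
    unfolding capacity_eq_Sup_achievable_rates using assms
    by (intro cSup_least) (auto intro: achievable_rate_le)
qed

lemma capacity_ge_on_off:
  assumes "0 < b" "b \<le> a" "0 \<le> \<tau>" "b * exp (- \<tau>) \<le> s"
  shows "ln (1 + b * \<tau>) * exp (- \<tau>) \<le> capacity s a"
proof -
  define P where "P = (\<lambda>t. b * indicator {\<tau>..} t :: real)"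
  have P_meas [measurable]: "P \<in> borel_measurable borel"
    unfolding P_def by measurable
  have P_bounds: "\<And>t. 0 \<le> P t \<and> P t \<le> a"
    using assms(1,2) unfolding P_def by (auto simp: indicator_def)
  have "Eg (\<lambda>t. ln (1 + P t * t)) \<in> achievable_rates s a"
    unfolding achievable_rates_def P_def
    using P_meas P_bounds assms(4) integrable_gainM_indicator[OF assms(3)]
      Eg_indicator[OF assms(3)]
    by (intro CollectI exI[of _ P]) (auto simp: P_def Eg_def)
  then have rate_le: "Eg (\<lambda>t. ln (1 + P t * t)) \<le> capacity s a"
    unfolding capacity_eq_Sup_achievable_rates using bdd_above_achievable_rates by (rule cSup_upper)
  have "ln (1 + b * \<tau>) * exp (- \<tau>) = Eg (\<lambda>t. ln (1 + b * \<tau>) * indicator {\<tau>..} t)"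
    using Eg_indicator[OF assms(3)] by (simp add: Eg_def)
  also have "\<dots> \<le> Eg (\<lambda>t. ln (1 + P t * t))"
    unfolding Eg_def
  proof (rule integral_mono)
    show "integrable gainM (\<lambda>t. ln (1 + b * \<tau>) * indicator {\<tau>..} t)"
      using integrable_gainM_indicator[OF assms(3)] by simp
    show "integrable gainM (\<lambda>t. ln (1 + P t * t))"
      by (rule integrable_gainM_rate[OF P_meas P_bounds])
    show "ln (1 + b * \<tau>) * indicator {\<tau>..} t \<le> ln (1 + P t * t)" for t
      using assms(1,3) mult_left_mono[of \<tau> t b]
      by (auto simp: P_def indicator_def add_pos_nonneg)
  qed
  finally show ?thesis
    using rate_le by linarith
qed

lemma capacity_ge_on_off_linearized:
  assumes "0 < s" "s \<le> b" "b \<le> a" "\<tau> = ln (b / s)" "b * \<tau> \<le> 1"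
  shows "s * \<tau> * (1 - b * \<tau>) \<le> capacity s a"
proof -
  have "0 \<le> \<tau>" and exp_tau: "exp (- \<tau>) = s / b"
    using assms by (simp_all add: exp_minus)
  have "s * \<tau> * (1 - b * \<tau>) = (b * \<tau> - (b * \<tau>)\<^sup>2) * (s / b)"
    using assms(1,2) by (simp add: field_simps power2_eq_square)
  also have "\<dots> \<le> ln (1 + b * \<tau>) * (s / b)"
    using ln_one_plus_pos_lower_bound[of "b * \<tau>"] assms \<open>0 \<le> \<tau>\<close>
    by (intro mult_right_mono) auto
  also have "\<dots> \<le> capacity s a"
    using capacity_ge_on_off[of b a \<tau> s] assms \<open>0 \<le> \<tau>\<close> exp_tau by simp
  finally show ?thesis .
qed

lemma capacity_le_snr_ln_papr:
  assumes "0 < s" "1 \<le> A"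
  shows "capacity s (A * s) \<le> s * ln A + s"
proof -
  have "capacity s (A * s) \<le> ln A * s + A * s * exp (- ln A)"
    using assms by (intro capacity_le) auto
  also have "A * s * exp (- ln A) = s"
    using assms by (simp add: exp_minus)
  finally show ?thesis
    by (simp add: mult.commute)
qed

lemma capacity_ge_snr_ln_papr:
  fixes s A :: real
  defines "L \<equiv> ln (1 / s)"
  assumes s: "0 < s" and A: "1 \<le> A" and L: "1 \<le> L" "2 * ln L \<le> L"
  shows "s * min (ln A) (L - 2 * ln L) * (1 - 1 / L) \<le> capacity s (A * s)"
proof -
  define \<tau> where "\<tau> = min (ln A) (L - 2 * ln L)"
  define b where "b = s * exp \<tau>"
  \<comment> \<open>the cap \<open>L - 2 ln L\<close> on \<open>\<tau>\<close> is what keeps \<open>b \<le> 1/L\<^sup>2\<close>\<close>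
  have "0 \<le> \<tau>"
    using A L(2) by (simp add: \<tau>_def)
  have "\<tau> \<le> L - 2 * ln L" "0 \<le> ln L"
    using L(1) by (simp_all add: \<tau>_def)
  then have "\<tau> \<le> L"
    by linarith
  have "exp L = 1 / s"
    using s by (simp add: L_def)
  moreover have "exp (2 * ln L) = L\<^sup>2"
    using L(1) by (simp only: mult_2 exp_add exp_ln[of L]) (simp_all add: power2_eq_square)
  ultimately have "s * exp (L - 2 * ln L) = 1 / L\<^sup>2"
    using s by (simp add: exp_diff)
  moreover have "b \<le> s * exp (L - 2 * ln L)"
    using s by (simp add: b_def \<tau>_def)
  ultimately have "b * \<tau> \<le> 1 / L\<^sup>2 * L"
    using \<open>0 \<le> \<tau>\<close> \<open>\<tau> \<le> L\<close> L(1) by (intro mult_mono) auto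
  then have b_tau: "b * \<tau> \<le> 1 / L"
    using L(1) by (simp add: power2_eq_square)
  have "exp \<tau> \<le> exp (ln A)"
    by (simp add: \<tau>_def)
  then have "b \<le> A * s"
    using s A by (simp add: b_def)
  moreover have "s \<le> b" "\<tau> = ln (b / s)"
    using s \<open>0 \<le> \<tau>\<close> by (simp_all add: b_def)
  moreover have "b * \<tau> \<le> 1"
    using b_tau L(1) by (smt (verit) divide_le_eq_1)
  ultimately have "s * \<tau> * (1 - b * \<tau>) \<le> capacity s (A * s)"
    using s by (intro capacity_ge_on_off_linearized)
  moreover have "s * \<tau> * (1 - 1 / L) \<le> s * \<tau> * (1 - b * \<tau>)"
    using s b_tau \<open>0 \<le> \<tau>\<close> by (intro mult_left_mono) auto
  ultimately show ?thesis
    by (simp add: \<tau>_def)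
qed

lemma Eg_water_filling_le:
  assumes "0 < l"
  shows "Eg (\<lambda>t. min (max 0 (1 / l - 1 / t)) a) \<le> exp (- l) / l"
proof -
  interpret prob_space gainM by (rule prob_space_gainM)
  have level_bound: "0 \<le> max 0 (1 / l - 1 / t) \<and> max 0 (1 / l - 1 / t) \<le> 1 / l * indicator {l..} t"
    if "0 < t" for t
  proof (cases "l \<le> t")
    case False
    then have "1 / l \<le> 1 / t"
      using frac_le[of 1 1 t l] that by simp
    then show ?thesis
      using False by (simp add: indicator_def)
  qed (use that assms in \<open>simp add: indicator_def\<close>)
  have "Eg (\<lambda>t. min (max 0 (1 / l - 1 / t)) a) \<le> Eg (\<lambda>t. 1 / l * indicator {l..} t)"
    unfolding Eg_def
  proof (rule integral_mono_AE)
    show "integrable gainM (\<lambda>t. min (max 0 (1 / l - 1 / t)) a)"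
    proof (rule integrable_const_bound[where B = "\<bar>a\<bar> + 1 / l"])
      show "AE t in gainM. norm (min (max 0 (1 / l - 1 / t)) a) \<le> \<bar>a\<bar> + 1 / l"
        using AE_gainM_pos
      proof eventually_elim
        case (elim t)
        then have "0 \<le> max 0 (1 / l - 1 / t)" "max 0 (1 / l - 1 / t) \<le> 1 / l"
          using level_bound[of t] assms by (auto simp: indicator_def split: if_splits)
        then show ?case
          by (smt (verit) real_norm_def)
      qed
    qed simp
    show "integrable gainM (\<lambda>t. 1 / l * indicator {l..} t)"
      using integrable_gainM_indicator[of l] assms by simp
    show "AE t in gainM. min (max 0 (1 / l - 1 / t)) a \<le> 1 / l * indicator {l..} t"
      using AE_gainM_pos
    proof eventually_elim
      case (elim t)
      then show ?case
        using level_bound[OF elim] by (auto intro: min.coboundedI1)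
    qed
  qed
  also have "\<dots> = exp (- l) / l"
    using Eg_indicator[of l] assms by (simp add: Eg_def)
  finally show ?thesis .
qed

lemma water_level_le_ln_inverse:
  fixes l s :: real
  assumes "0 < l" "0 < s" "s \<le> exp (- l) / l" "1 \<le> ln (1 / s)"
  shows "l \<le> ln (1 / s)"
proof (cases "1 \<le> l")
  case True
  then have "exp (- l) / l \<le> exp (- l)"
    using divide_left_mono[of 1 l "exp (- l)"] by simp
  then have "ln s \<le> ln (exp (- l))"
    using assms(2,3) by (subst ln_le_cancel_iff) auto
  then show ?thesis
    using assms(2) by (simp add: ln_div)
qed (use assms in linarith)

text \<open>\<open>1 / (1 / l - a) - l = l\<^sup>2 a / (1 - l a)\<close>, so a lower bound \<open>c\<close> on it bounds \<open>a\<close> from below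
  once \<open>l\<close> is bounded above.\<close>
lemma peak_ge_of_gap_gt:
  fixes c l L a :: real
  assumes "0 < c" "c \<le> 1" "0 < l" "l \<le> L" "1 \<le> L" "l * a < 1"
    and "c < 1 / (1 / l - a) - l"
  shows "c / (2 * L\<^sup>2) \<le> a"
proof -
  have "1 / l - a = (1 - l * a) / l"
    using assms(3) by (simp add: field_simps)
  then have "1 / (1 / l - a) - l = l\<^sup>2 * a / (1 - l * a)"
    using assms(3,6) by (simp add: field_simps power2_eq_square)
  then have "c * (1 - l * a) < l\<^sup>2 * a"
    using assms(6,7) by (simp add: pos_less_divide_eq)
  then have gap: "c < a * (l\<^sup>2 + c * l)"
    by (simp add: algebra_simps power2_eq_square)
  have "0 < l\<^sup>2 + c * l"
    using assms(1,3) by (intro add_pos_pos) auto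
  moreover have "0 < a * (l\<^sup>2 + c * l)"
    using gap assms(1) by linarith
  ultimately have "0 < a"
    by (simp add: zero_less_mult_iff)
  have "l\<^sup>2 \<le> L\<^sup>2" "c * l \<le> L" "L \<le> L\<^sup>2"
    using assms(1-5) mult_mono[of c 1 l L] power_mono[of l L 2]
    by (auto simp: power2_eq_square)
  then have "a * (l\<^sup>2 + c * l) \<le> a * (2 * L\<^sup>2)"
    using \<open>0 < a\<close> by (intro mult_left_mono) auto
  then show ?thesis
    using gap assms(5) by (simp add: divide_le_eq mult.commute)
qed

lemma peak_ge_of_water_level:
  fixes s a l c :: real
  assumes "0 < s" "1 \<le> ln (1 / s)" "0 < c" "c \<le> 1" "0 < l" "l * a < 1"
    and "s = Eg (\<lambda>t. min (max 0 (1 / l - 1 / t)) a)"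
    and "c < 1 / (1 / l - a) - l"
  shows "c / (2 * (ln (1 / s))\<^sup>2) \<le> a"
proof -
  have "s \<le> exp (- l) / l"
    using assms(7) Eg_water_filling_le[OF assms(5)] by (rule ord_eq_le_trans)
  then have "l \<le> ln (1 / s)"
    by (rule water_level_le_ln_inverse[OF assms(5,1) _ assms(2)])
  then show ?thesis
    by (rule peak_ge_of_gap_gt[OF assms(3-5) _ assms(2,6,8)])
qed

lemma tendsto_divide_sandwich:
  fixes f g h k :: "'a \<Rightarrow> real"
  assumes "eventually (\<lambda>x. 0 < g x \<and> f x * g x \<le> h x \<and> h x \<le> k x * g x) F"
    and "(f \<longlongrightarrow> 1) F" "(k \<longlongrightarrow> 1) F"
  shows "((\<lambda>x. h x / g x) \<longlongrightarrow> 1) F"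
proof (rule tendsto_sandwich[OF _ _ assms(2,3)])
  show "eventually (\<lambda>x. f x \<le> h x / g x) F"
    using assms(1) by eventually_elim (simp add: pos_le_divide_eq)
  show "eventually (\<lambda>x. h x / g x \<le> k x) F"
    using assms(1) by eventually_elim (simp add: pos_divide_le_eq)
qed

lemma capacity_asymp_snr_ln_papr:
  fixes A :: "real \<Rightarrow> real"
  assumes "filterlim A at_top (at_right 0)" and "((\<lambda>s. A s * s) \<longlongrightarrow> 0) (at_right 0)"
  shows "((\<lambda>s. capacity s (A s * s) / (s * ln (A s))) \<longlongrightarrow> 1) (at_right 0)"
proof (rule tendsto_divide_sandwich)
  let ?L = "\<lambda>s::real. ln (1 / s)"
  have "eventually (\<lambda>s::real. 0 < s \<and> s < 1) (at_right 0)"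
    using eventually_at_right_real[of 0 1] by simp
  moreover have "eventually (\<lambda>s. 1 \<le> ?L s) (at_right 0)"
    by real_asymp
  moreover have "eventually (\<lambda>s. 2 * ln (?L s) \<le> ?L s) (at_right 0)"
    by real_asymp
  moreover have "eventually (\<lambda>s. 2 \<le> A s) (at_right 0)"
    using assms(1) by (simp add: filterlim_at_top)
  moreover have "eventually (\<lambda>s. A s * s < 1) (at_right 0)"
    using order_tendstoD(2)[OF assms(2), of 1] by simp
  ultimately show "eventually (\<lambda>s. 0 < s * ln (A s)
      \<and> (1 - 1 / ?L s) * ((?L s - 2 * ln (?L s)) / ?L s) * (s * ln (A s)) \<le> capacity s (A s * s)
      \<and> capacity s (A s * s) \<le> (1 + 1 / ln (A s)) * (s * ln (A s))) (at_right 0)"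
  proof eventually_elim
    case (elim s)
    define q where "q = (?L s - 2 * ln (?L s)) / ?L s"
    have "0 < ln (A s)" "ln (A s) \<le> ?L s"
      using elim by (auto simp: pos_le_divide_eq)
    moreover have "0 \<le> q" "q \<le> 1" "q * ?L s = ?L s - 2 * ln (?L s)"
      using elim by (auto simp: q_def)
    ultimately have "q * ln (A s) \<le> min (ln (A s)) (?L s - 2 * ln (?L s))"
      using mult_left_mono[of "ln (A s)" "?L s" q] mult_right_mono[of q 1 "ln (A s)"]
      by (auto simp: mult.commute)
    then have "s * (1 - 1 / ?L s) * (q * ln (A s))
        \<le> s * (1 - 1 / ?L s) * min (ln (A s)) (?L s - 2 * ln (?L s))"
      using elim by (intro mult_left_mono) auto
    also have "\<dots> \<le> capacity s (A s * s)"
      using elim capacity_ge_snr_ln_papr[of s "A s"] by (simp only: mult_ac)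
    finally have "(1 - 1 / ?L s) * q * (s * ln (A s)) \<le> capacity s (A s * s)"
      by (simp only: mult_ac)
    moreover have "(1 + 1 / ln (A s)) * (s * ln (A s)) = s * ln (A s) + s"
      using \<open>0 < ln (A s)\<close> by (simp add: field_simps)
    then have "capacity s (A s * s) \<le> (1 + 1 / ln (A s)) * (s * ln (A s))"
      using elim capacity_le_snr_ln_papr[of s "A s"] by simp
    moreover have "0 < s * ln (A s)"
      using elim \<open>0 < ln (A s)\<close> by simp
    ultimately show ?case
      unfolding q_def by blast
  qed
  show "((\<lambda>s. (1 - 1 / ?L s) * ((?L s - 2 * ln (?L s)) / ?L s)) \<longlongrightarrow> 1) (at_right 0)"
    by real_asymp
  have "filterlim (\<lambda>s. ln (A s)) at_top (at_right 0)"
    by (rule filterlim_compose[OF ln_at_top assms(1)])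
  then show "((\<lambda>s. 1 + 1 / ln (A s)) \<longlongrightarrow> 1) (at_right 0)"
    using tendsto_add[OF tendsto_const[of 1] tendsto_inverse_0_at_top] by (simp add: inverse_eq_divide)
qed

lemma ln_papr_asymp_ln_inverse_snr:
  fixes A lam :: "real \<Rightarrow> real" and l0 :: ereal
  assumes A_snr: "((\<lambda>s. A s * s) \<longlongrightarrow> 0) (at_right 0)"
    and lam: "eventually (\<lambda>s. lam s > 0 \<and>
                 s = Eg (\<lambda>t. min (max 0 (1 / lam s - 1 / t)) (A s * s)) \<and>
                 lam s * A s * s < 1) (at_right 0)"
    and l0: "((\<lambda>s. ereal (1 / (1 / lam s - A s * s) - lam s)) \<longlongrightarrow> l0) (at_right 0)"
    and "l0 > 0"
  shows "((\<lambda>s. ln (A s) / ln (1 / s)) \<longlongrightarrow> 1) (at_right 0)"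
proof -
  obtain c0 where "0 < ereal c0" "ereal c0 < l0"
    using ereal_dense2[OF \<open>l0 > 0\<close>] by blast
  define c where "c = min c0 1"
  have c: "0 < c" "c \<le> 1" "c \<le> c0"
    using \<open>0 < ereal c0\<close> by (auto simp: c_def)
  let ?L = "\<lambda>s::real. ln (1 / s)"
  show ?thesis
  proof (rule tendsto_divide_sandwich)
    have "eventually (\<lambda>s. ereal c0 < ereal (1 / (1 / lam s - A s * s) - lam s)) (at_right 0)"
      using order_tendstoD(1)[OF l0 \<open>ereal c0 < l0\<close>] .
    moreover have "eventually (\<lambda>s::real. 0 < s \<and> s < 1) (at_right 0)"
      using eventually_at_right_real[of 0 1] by simp
    moreover have "eventually (\<lambda>s. 1 \<le> ?L s) (at_right 0)"
      by real_asymp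
    moreover have "eventually (\<lambda>s. A s * s < 1) (at_right 0)"
      using order_tendstoD(2)[OF A_snr, of 1] by simp
    ultimately show "eventually (\<lambda>s. 0 < ?L s
        \<and> (?L s - 2 * ln (?L s) + ln (c / 2)) / ?L s * ?L s \<le> ln (A s)
        \<and> ln (A s) \<le> 1 * ?L s) (at_right 0)"
      using lam
    proof eventually_elim
      case (elim s)
      have s: "0 < s" "1 \<le> ?L s" "A s * s < 1"
        using elim(2-4) by auto
      \<comment> \<open>the water level equation must be kept away from the simplifier: \<open>s\<close> occurs on its right-hand side\<close>
      from elim(5) have lam_pos: "0 < lam s" and "lam s * A s * s < 1"
        and water: "s = Eg (\<lambda>t. min (max 0 (1 / lam s - 1 / t)) (A s * s))"
        by blast+
      have "lam s * (A s * s) < 1"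
        using \<open>lam s * A s * s < 1\<close> by (simp add: mult.assoc)
      moreover have "c < 1 / (1 / lam s - A s * s) - lam s"
        using elim(1) c by simp
      ultimately have peak: "c / (2 * (?L s)\<^sup>2) \<le> A s * s"
        by (rule peak_ge_of_water_level[OF s(1,2) c(1,2) lam_pos _ water])
      moreover have "0 < c / (2 * (?L s)\<^sup>2)"
        using c(1) s(2) by (intro divide_pos_pos) auto
      ultimately have "0 < A s * s"
        by linarith
      then have "0 < A s"
        using s(1) by (simp add: zero_less_mult_iff)
      have "ln (c / (2 * (?L s)\<^sup>2)) \<le> ln (A s * s)"
        using peak \<open>0 < c / (2 * (?L s)\<^sup>2)\<close> by simp
      moreover have "ln (A s * s) = ln (A s) - ?L s"
        using s(1) \<open>0 < A s\<close> by (simp add: ln_mult ln_div)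
      moreover have "ln (c / (2 * x\<^sup>2)) = ln (c / 2) - 2 * ln x" if "0 < x" for x
        using c(1) that by (simp add: ln_div ln_mult ln_realpow)
      ultimately have "?L s - 2 * ln (?L s) + ln (c / 2) \<le> ln (A s)"
        using s(2) by fastforce
      moreover have "ln (A s) \<le> ?L s"
        using s \<open>0 < A s\<close> by (simp add: pos_le_divide_eq)
      moreover have "0 < ?L s"
        using s(2) by linarith
      ultimately show ?case
        by simp
    qed
    show "((\<lambda>s. (?L s - 2 * ln (?L s) + ln (c / 2)) / ?L s) \<longlongrightarrow> 1) (at_right 0)"
      by real_asymp
  qed simp
qed

theorem theorem2:
  fixes A lam0 lam :: "real \<Rightarrow> real" and l0 :: ereal
  assumes A_inf: "filterlim A at_top (at_right 0)"
    and A_snr: "((\<lambda>s. A s * s) \<longlongrightarrow> 0) (at_right 0)"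
    and lam0: "eventually (\<lambda>s. lam0 s > 0 \<and>
                 s = Eg (\<lambda>t. max 0 (1 / lam0 s - 1 / t)) \<and>
                 A s * s < 1 / lam0 s) (at_right 0)"
    and lam: "eventually (\<lambda>s. lam s > 0 \<and>
                 s = Eg (\<lambda>t. min (max 0 (1 / lam s - 1 / t)) (A s * s)) \<and>
                 lam s * A s * s < 1) (at_right 0)"
    and l0: "((\<lambda>s. ereal (1 / (1 / lam s - A s * s) - lam s)) \<longlongrightarrow> l0) (at_right 0)"
  shows "(l0 > 0 \<longrightarrow>
            ((\<lambda>s. capacity s (A s * s) / (s * ln (1 / s))) \<longlongrightarrow> 1) (at_right 0))
       \<and> (l0 = 0 \<longrightarrow>
            ((\<lambda>s. capacity s (A s * s) / (s * ln (A s))) \<longlongrightarrow> 1) (at_right 0))"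
proof (intro conjI impI)
  let ?C = "\<lambda>s. capacity s (A s * s)"
  have C_asymp: "((\<lambda>s. ?C s / (s * ln (A s))) \<longlongrightarrow> 1) (at_right 0)"
    using A_inf A_snr by (rule capacity_asymp_snr_ln_papr)
  then show "((\<lambda>s. ?C s / (s * ln (A s))) \<longlongrightarrow> 1) (at_right 0)" .
  assume "l0 > 0"
  with A_snr lam l0 have "((\<lambda>s. ln (A s) / ln (1 / s)) \<longlongrightarrow> 1) (at_right 0)"
    by (rule ln_papr_asymp_ln_inverse_snr)
  from tendsto_mult[OF C_asymp this]
  have "((\<lambda>s. ?C s / (s * ln (A s)) * (ln (A s) / ln (1 / s))) \<longlongrightarrow> 1) (at_right 0)"
    by simp
  moreover have "eventually (\<lambda>s. ?C s / (s * ln (A s)) * (ln (A s) / ln (1 / s))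
      = ?C s / (s * ln (1 / s))) (at_right 0)"
    using A_inf[unfolded filterlim_at_top, rule_format, of 2]
  proof eventually_elim
    case (elim s)
    then have "0 < ln (A s)"
      by simp
    then show ?case
      by simp
  qed
  ultimately show "((\<lambda>s. ?C s / (s * ln (1 / s))) \<longlongrightarrow> 1) (at_right 0)"
    by (rule Lim_transform_eventually)
qed

end
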